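(* Let $G$ be the path $P_n$ or the cycle $C_n$ with $n\geq 3$, and let $c_0:V(G)\to\mathbb{Z}$ be any initial chip configuration. Then the sequence of configurations $(c_t)_{t\geq 0}$ produced by the diffusion process is eventually periodic, i.e. there exist integers $t\geq 0$ and $p\geq 1$ with $c_{t+p}=c_t$.
   Context: Diffusion process: for a finite simple graph $G$ and a chip configuration $c_t:V(G)\to\mathbb{Z}$ (negative values allowed), the next configuration is defined simultaneously for every vertex $u$ by $c_{t+1}(u)=c_t(u)-|\{w\in N(u): c_t(u)>c_t(w)\}|+|\{w\in N(u): c_t(u)<c_t(w)\}|$. That is, every vertex sends one chip to each neighbour having strictly fewer chips. *)

theory Defs
  imports Main
begin

text \<open>A finite simple graph is given by a finite vertex set V and a symmetric,
irreflexive adjacency relation adj. Neighbourhood of u: the w in V with adj u w.\<close>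

definition nbrs :: "'a set \<Rightarrow> ('a \<Rightarrow> 'a \<Rightarrow> bool) \<Rightarrow> 'a \<Rightarrow> 'a set" where
  "nbrs V adj u = {w \<in> V. adj u w}"

definition diffusion_step ::
  "'a set \<Rightarrow> ('a \<Rightarrow> 'a \<Rightarrow> bool) \<Rightarrow> ('a \<Rightarrow> int) \<Rightarrow> ('a \<Rightarrow> int)" where
  "diffusion_step V adj c = (\<lambda>u. if u \<in> V then
      c u - int (card {w \<in> nbrs V adj u. c u > c w})
          + int (card {w \<in> nbrs V adj u. c u < c w})
    else c u)"

definition diffusion :: "'a set \<Rightarrow> ('a \<Rightarrow> 'a \<Rightarrow> bool) \<Rightarrow> ('a \<Rightarrow> int) \<Rightarrow> nat \<Rightarrow> ('a \<Rightarrow> int)" where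
  "diffusion V adj c0 t = (diffusion_step V adj ^^ t) c0"

definition path_adj :: "nat \<Rightarrow> nat \<Rightarrow> bool" where
  "path_adj i j \<longleftrightarrow> j = i + 1 \<or> i = j + 1"

definition cycle_adj :: "nat \<Rightarrow> nat \<Rightarrow> nat \<Rightarrow> bool" where
  "cycle_adj n i j \<longleftrightarrow> i \<noteq> j \<and> (j = (i + 1) mod n \<or> i = (j + 1) mod n)"

end

theory Submission
  imports Defs "HOL-Library.FuncSet"
begin

text \<open>In a graph of maximum degree 2 the diffusion never raises a vertex more than one chip above
the initial maximum K. A vertex can only reach K+1 from K-1, by receiving a chip from both of its
neighbours; these then held at least K chips and each loses one to it, so every neighbour of a vertex
at height K+1 is at most K-1. Being at most K+1, with vertices at K+1 of degree 2 and surrounded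
by values at most K-1 (the predicate capped), is preserved by a step. Applied to -c, the bound
also gives min c0 - 1 from below, so only finitely many configurations occur and some repeats.\<close>

definition capped :: "'a set \<Rightarrow> ('a \<Rightarrow> 'a \<Rightarrow> bool) \<Rightarrow> int \<Rightarrow> ('a \<Rightarrow> int) \<Rightarrow> bool" where
  "capped V adj K c \<longleftrightarrow> (\<forall>v\<in>V. c v \<le> K + 1 \<and>
     (c v = K + 1 \<longrightarrow> 2 \<le> card (nbrs V adj v) \<and> (\<forall>w\<in>nbrs V adj v. c w \<le> K - 1)))"

lemma diffusion_0: "diffusion V adj c0 0 = c0"
  by (simp add: diffusion_def)

lemma diffusion_Suc: "diffusion V adj c0 (Suc t) = diffusion_step V adj (diffusion V adj c0 t)"
  by (simp add: diffusion_def)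

lemma diffusion_step_eq:
  "u \<in> V \<Longrightarrow> diffusion_step V adj c u =
     c u - int (card {w \<in> nbrs V adj u. c u > c w}) + int (card {w \<in> nbrs V adj u. c u < c w})"
  by (simp add: diffusion_step_def)

lemma diffusion_step_uminus:
  "diffusion_step V adj (\<lambda>u. - c u) = (\<lambda>u. - diffusion_step V adj c u)"
proof
  fix u
  have "{w \<in> nbrs V adj u. - c u > - c w} = {w \<in> nbrs V adj u. c u < c w}"
   and "{w \<in> nbrs V adj u. - c u < - c w} = {w \<in> nbrs V adj u. c u > c w}" by auto
  then show "diffusion_step V adj (\<lambda>u. - c u) u = - diffusion_step V adj c u"
    by (simp add: diffusion_step_def)
qed

lemma diffusion_uminus: "diffusion V adj (\<lambda>u. - c u) t = (\<lambda>u. - diffusion V adj c t u)"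
  by (induction t) (simp_all add: diffusion_0 diffusion_Suc diffusion_step_uminus)

lemma ex_repetition_if_finite_range:
  fixes f :: "nat \<Rightarrow> 'b"
  assumes "finite (range f)"
  shows "\<exists>i j. i < j \<and> f i = f j"
proof -
  have "\<not> inj f"
    using assms finite_imageD infinite_UNIV_nat by blast
  then obtain x y where "x \<noteq> y" "f x = f y"
    unfolding inj_def by blast
  then show ?thesis
    by (metis linorder_neqE_nat)
qed

locale max_degree_2 =
  fixes V :: "'a set" and adj :: "'a \<Rightarrow> 'a \<Rightarrow> bool"
  assumes finite_V: "finite V"
    and adj_sym: "\<And>u w. adj u w \<Longrightarrow> adj w u"
    and card_nbrs_le_2: "\<And>u. u \<in> V \<Longrightarrow> card (nbrs V adj u) \<le> 2"
begin

lemma finite_nbrs: "finite (nbrs V adj u)"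
  using finite_V unfolding nbrs_def by auto

lemma nbrs_sym: "u \<in> V \<Longrightarrow> w \<in> nbrs V adj u \<Longrightarrow> u \<in> nbrs V adj w"
  unfolding nbrs_def using adj_sym by auto

lemma card_lower_plus_card_higher_le:
  fixes c :: "'a \<Rightarrow> int"
  shows "card {w \<in> nbrs V adj u. c u > c w} + card {w \<in> nbrs V adj u. c u < c w} \<le> card (nbrs V adj u)"
proof -
  have "card {w \<in> nbrs V adj u. c u > c w} + card {w \<in> nbrs V adj u. c u < c w}
        = card ({w \<in> nbrs V adj u. c u > c w} \<union> {w \<in> nbrs V adj u. c u < c w})"
    by (rule card_Un_disjoint[symmetric]) (use finite_nbrs in auto)
  also have "\<dots> \<le> card (nbrs V adj u)"
    by (rule card_mono[OF finite_nbrs]) auto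
  finally show ?thesis .
qed

lemma diffusion_step_le_add_2:
  assumes "u \<in> V"
  shows "diffusion_step V adj c u \<le> c u + 2"
  using diffusion_step_eq[OF assms, of adj c] card_lower_plus_card_higher_le[of u c]
    card_nbrs_le_2[OF assms] by linarith

lemma capped_nbr_of_peak:
  assumes "capped V adj K c" "u \<in> V" "w \<in> nbrs V adj u" "c w = K + 1"
  shows "c u \<le> K - 1"
  using assms nbrs_sym[OF assms(2,3)] unfolding capped_def nbrs_def by auto

lemma diffusion_step_at_peak:
  assumes "capped V adj K c" "u \<in> V" "c u = K + 1"
  shows "diffusion_step V adj c u \<le> K - 1"
proof -
  have low: "\<forall>w\<in>nbrs V adj u. c w \<le> K - 1" and deg: "2 \<le> card (nbrs V adj u)"
    using assms unfolding capped_def by auto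
  have "{w \<in> nbrs V adj u. c u > c w} = nbrs V adj u"
   and "{w \<in> nbrs V adj u. c u < c w} = {}"
    using low assms(3) by force+
  with diffusion_step_eq[OF assms(2), of adj c]
  have "diffusion_step V adj c u = c u - int (card (nbrs V adj u))"
    by simp
  then show ?thesis
    using assms(3) deg by linarith
qed

lemma diffusion_step_at_cap:
  assumes "capped V adj K c" "u \<in> V" "c u = K"
  shows "diffusion_step V adj c u \<le> K - int (card {w \<in> nbrs V adj u. c u > c w})"
proof -
  have "{w \<in> nbrs V adj u. c u < c w} = {}"
  proof (rule ccontr)
    assume "{w \<in> nbrs V adj u. c u < c w} \<noteq> {}"
    then obtain w where w: "w \<in> nbrs V adj u" "c u < c w" by auto
    then have "c w \<le> K + 1"
      using assms(1) unfolding capped_def nbrs_def by auto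
    then show False
      using w assms capped_nbr_of_peak[OF assms(1,2) w(1)] by auto
  qed
  then have "card {w \<in> nbrs V adj u. c u < c w} = 0"
    by (metis card.empty)
  with diffusion_step_eq[OF assms(2), of adj c] show ?thesis
    using assms(3) by linarith
qed

lemma diffusion_step_from_below_cap:
  assumes "capped V adj K c" "u \<in> V" "c u = K - 1" "diffusion_step V adj c u = K + 1"
  shows "2 \<le> card (nbrs V adj u)" "\<forall>w\<in>nbrs V adj u. diffusion_step V adj c w \<le> K - 1"
proof -
  let ?N = "nbrs V adj u"
  let ?H = "{w \<in> ?N. c u < c w}"
  have sum: "card {w \<in> ?N. c u > c w} + card ?H \<le> card ?N"
    by (rule card_lower_plus_card_higher_le)
  have "card ?H = 2"
    using diffusion_step_eq[OF assms(2), of adj c] sum card_nbrs_le_2[OF assms(2)] assms(3,4)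
    by linarith
  then show deg: "2 \<le> card ?N"
    using sum by linarith
  have "?H = ?N"
    using card_subset_eq[OF finite_nbrs, of ?H] \<open>card ?H = 2\<close> card_nbrs_le_2[OF assms(2)] deg
    by fastforce
  show "\<forall>w\<in>?N. diffusion_step V adj c w \<le> K - 1"
  proof
    fix w assume w: "w \<in> ?N"
    then have wV: "w \<in> V" unfolding nbrs_def by auto
    have "w \<in> ?H"
      using w \<open>?H = ?N\<close> by blast
    then have "c w \<ge> K"
      using assms(3) by simp
    moreover have "c w \<le> K + 1"
      using assms(1) wV unfolding capped_def by blast
    ultimately have "c w = K + 1 \<or> c w = K"
      by linarith
    then show "diffusion_step V adj c w \<le> K - 1"
    proof
      assume "c w = K + 1"
      then show ?thesis using diffusion_step_at_peak[OF assms(1) wV] by simp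
    next
      assume cw: "c w = K"
      have "u \<in> {x \<in> nbrs V adj w. c w > c x}"
        using nbrs_sym[OF assms(2) w] cw assms(3) by auto
      then have "card {x \<in> nbrs V adj w. c w > c x} > 0"
        using finite_nbrs[of w] by (auto simp: card_gt_0_iff)
      then show ?thesis
        using diffusion_step_at_cap[OF assms(1) wV cw] by linarith
    qed
  qed
qed

lemma capped_diffusion_step:
  assumes "capped V adj K c"
  shows "capped V adj K (diffusion_step V adj c)"
  unfolding capped_def
proof
  fix u assume u: "u \<in> V"
  have "c u \<le> K + 1" using assms u unfolding capped_def by auto
  then consider "c u = K + 1" | "c u = K" | "c u = K - 1" | "c u \<le> K - 2" by linarith
  then show "diffusion_step V adj c u \<le> K + 1 \<and> (diffusion_step V adj c u = K + 1 \<longrightarrow>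
      2 \<le> card (nbrs V adj u) \<and> (\<forall>w\<in>nbrs V adj u. diffusion_step V adj c w \<le> K - 1))"
  proof cases
    case 1 then show ?thesis using diffusion_step_at_peak[OF assms u] by simp
  next
    case 2 then show ?thesis using diffusion_step_at_cap[OF assms u] by simp
  next
    case 3 then show ?thesis
      using diffusion_step_le_add_2[OF u, of c] diffusion_step_from_below_cap[OF assms u] by auto
  next
    case 4 then show ?thesis using diffusion_step_le_add_2[OF u, of c] by simp
  qed
qed

lemma diffusion_le:
  assumes "\<forall>v\<in>V. c0 v \<le> K"
  shows "\<forall>v\<in>V. diffusion V adj c0 t v \<le> K + 1"
proof -
  have "capped V adj K (diffusion V adj c0 t)"
  proof (induction t)
    case 0 then show ?case using assms unfolding capped_def diffusion_0 by force
  next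
    case (Suc t) then show ?case using capped_diffusion_step by (simp add: diffusion_Suc)
  qed
  then show ?thesis unfolding capped_def by blast
qed

lemma diffusion_ge:
  assumes "\<forall>v\<in>V. k \<le> c0 v"
  shows "\<forall>v\<in>V. k - 1 \<le> diffusion V adj c0 t v"
proof -
  have "\<forall>v\<in>V. diffusion V adj (\<lambda>u. - c0 u) t v \<le> - k + 1"
    using diffusion_le[of "\<lambda>u. - c0 u" "- k"] assms by auto
  then show ?thesis by (auto simp: diffusion_uminus)
qed

theorem diffusion_eventually_periodic:
  "\<exists>t p. 1 \<le> p \<and> (\<forall>u\<in>V. diffusion V adj c0 (t + p) u = diffusion V adj c0 t u)"
proof -
  define m where "m = Min (c0 ` V)"
  define M where "M = Max (c0 ` V)"
  let ?c = "\<lambda>t. restrict (diffusion V adj c0 t) V"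
  have "?c t \<in> (\<Pi>\<^sub>E v\<in>V. {m - 1..M + 1})" for t
    using diffusion_ge[of m c0 t] diffusion_le[of c0 M t] finite_V
    by (auto simp: m_def M_def)
  then have "finite (range ?c)"
    by (rule finite_subset[OF image_subsetI finite_PiE[OF finite_V]]) simp
  then obtain i j where "i < j" "?c i = ?c j"
    using ex_repetition_if_finite_range by blast
  have "diffusion V adj c0 (i + (j - i)) u = diffusion V adj c0 i u" if "u \<in> V" for u
    using fun_cong[OF \<open>?c i = ?c j\<close>, of u] that \<open>i < j\<close> by simp
  then show ?thesis
    using \<open>i < j\<close> by (intro exI[of _ i] exI[of _ "j - i"]) simp
qed

end

lemma card_doubleton_le_2: "card {a, b} \<le> 2"
  by (cases "a = b") auto

lemma cycle_pred_eq:
  fixes w n u :: nat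
  assumes "w < n" "(w + 1) mod n = u"
  shows "w = (u + n - 1) mod n"
proof (cases "w + 1 < n")
  case True
  then have "u + n - 1 = w + n" using assms by simp
  then show ?thesis using assms by simp
next
  case False
  then have "w + 1 = n" using assms by simp
  moreover have "u = 0" using assms calculation by simp
  ultimately show ?thesis by simp
qed

lemma path_max_degree_2: "max_degree_2 {0..<n} path_adj"
proof
  fix u
  have "nbrs {0..<n} path_adj u \<subseteq> {u + 1, u - 1}"
    unfolding nbrs_def path_adj_def by auto
  then have "card (nbrs {0..<n} path_adj u) \<le> card {u + 1, u - 1}"
    by (rule card_mono[rotated]) simp
  also have "\<dots> \<le> 2"
    by (rule card_doubleton_le_2)
  finally show "card (nbrs {0..<n} path_adj u) \<le> 2" .
qed (auto simp: path_adj_def)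

lemma cycle_max_degree_2: "max_degree_2 {0..<n} (cycle_adj n)"
proof
  fix u
  have "nbrs {0..<n} (cycle_adj n) u \<subseteq> {(u + 1) mod n, (u + n - 1) mod n}"
  proof
    fix w assume "w \<in> nbrs {0..<n} (cycle_adj n) u"
    then have "w < n" "w = (u + 1) mod n \<or> u = (w + 1) mod n"
      unfolding nbrs_def cycle_adj_def by auto
    then show "w \<in> {(u + 1) mod n, (u + n - 1) mod n}"
      using cycle_pred_eq by blast
  qed
  then have "card (nbrs {0..<n} (cycle_adj n) u) \<le> card {(u + 1) mod n, (u + n - 1) mod n}"
    by (rule card_mono[rotated]) simp
  also have "\<dots> \<le> 2"
    by (rule card_doubleton_le_2)
  finally show "card (nbrs {0..<n} (cycle_adj n) u) \<le> 2" .
qed (auto simp: cycle_adj_def)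

theorem theorem7:
  fixes n :: nat and adj :: "nat \<Rightarrow> nat \<Rightarrow> bool" and c0 :: "nat \<Rightarrow> int"
  assumes "n \<ge> 3"
    and "adj = path_adj \<or> adj = cycle_adj n"
  shows "\<exists>t p. p \<ge> 1 \<and>
           (\<forall>u\<in>{0..<n}. diffusion {0..<n} adj c0 (t + p) u = diffusion {0..<n} adj c0 t u)"
proof -
  have "max_degree_2 {0..<n} adj"
    using assms(2) path_max_degree_2 cycle_max_degree_2 by blast
  then show ?thesis
    using max_degree_2.diffusion_eventually_periodic by blast
qed

end
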